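(* Let $q$ be a positive integer which is not prime, with $q_0\ge 4$, and let $n$ be an integer with $2\le n\le q_0-2$. Then \[ |I_0(q,n)|\ \ge\ \frac{1}{q_0}\binom{q_0}{n}. \]
   Context: Set $q_0=(q-1)/2$ if $q$ is odd and $q_0=q/2$ if $q$ is even. Let $\widetilde I(q,n)$ be the set of $n$-tuples of integers and $\widetilde I_0(q,n)=\{(p_1,\dots,p_n)\in\widetilde I(q,n): p_i\not\equiv \pm p_j \pmod q \text{ for } 1\le i<j\le n,\ \gcd(p_1,\dots,p_n,q)=1\}$. Two tuples $(p_1,\dots,p_n)$ and $(s_1,\dots,s_n)$ are equivalent if there exist an integer $l$ coprime to $q$ and signs $e_i\in\{-1,1\}$ such that $(p_1,\dots,p_n)$ is a permutation of $(e_1ls_1,\dots,e_nls_n)$ modulo $q$. $I_0(q,n)=\widetilde I_0(q,n)/\!\sim$. *)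

theory Defs
  imports "HOL-Number_Theory.Number_Theory" "HOL-Combinatorics.Permutations"
begin

definition q0 :: "nat \<Rightarrow> nat" where
  "q0 q = (if odd q then (q - 1) div 2 else q div 2)"

definition I0_tilde :: "nat \<Rightarrow> nat \<Rightarrow> int list set" where
  "I0_tilde q n = {p. length p = n \<and>
      (\<forall>i j. i < j \<and> j < n \<longrightarrow>
          \<not> [p ! i = p ! j] (mod int q) \<and> \<not> [p ! i = - (p ! j)] (mod int q)) \<and>
      Gcd (insert (int q) (set p)) = 1}"

definition tuple_equiv :: "nat \<Rightarrow> nat \<Rightarrow> int list \<Rightarrow> int list \<Rightarrow> bool" where
  "tuple_equiv q n p s \<longleftrightarrow>
     (\<exists>(l::int) (e::nat \<Rightarrow> int) \<sigma>. coprime l (int q) \<and> (\<forall>i<n. e i \<in> {-1, 1}) \<and>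
        \<sigma> permutes {..<n} \<and>
        (\<forall>i<n. [p ! i = e (\<sigma> i) * l * s ! (\<sigma> i)] (mod int q)))"

definition I0_rel :: "nat \<Rightarrow> nat \<Rightarrow> (int list \<times> int list) set" where
  "I0_rel q n = {(p, s). p \<in> I0_tilde q n \<and> s \<in> I0_tilde q n \<and> tuple_equiv q n p s}"

definition I0 :: "nat \<Rightarrow> nat \<Rightarrow> int list set set" where
  "I0 q n = I0_tilde q n // I0_rel q n"

end

theory Submission imports Defs begin

(* Call a set A \<subseteq> {1..q0} with |A| = n and 1 \<in> A normalized; its
   increasing tuple lies in I0_tilde, because distinct integers in {1..q0} are never
   congruent up to sign modulo q (q \<ge> 2 q0).  Sending A to the class of its tuple
   is at most n-to-1: if the tuples of A and A' are equivalent via the unit l, then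
   the entry c of A matching 1 \<in> A' satisfies c \<equiv> \<pm>l, and A' is recovered from A and c
   as the set of b \<in> {1..q0} with c b congruent up to sign to an element of A.
   Hence C(q0-1, n-1) = #normalized sets \<le> n |I0(q,n)|, and the bound follows from
   n C(q0, n) = q0 C(q0-1, n-1).
   The argument only needs q > 0, n \<ge> 1 and q0 \<ge> 1. *)

section \<open>Congruence up to sign\<close>

definition pm_cong :: "int \<Rightarrow> int \<Rightarrow> int \<Rightarrow> bool" where
  "pm_cong m x y \<longleftrightarrow> [x = y] (mod m) \<or> [x = - y] (mod m)"

lemma pm_cong_of_sign:
  "w \<in> {-1, 1} \<Longrightarrow> [x = w * y] (mod m) \<Longrightarrow> pm_cong m x y"
  by (auto simp: pm_cong_def)

lemma pm_cong_sym: "pm_cong m x y \<Longrightarrow> pm_cong m y x"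
  unfolding pm_cong_def by (metis cong_sym cong_minus_minus_iff minus_minus)

lemma pm_cong_trans: "pm_cong m x y \<Longrightarrow> pm_cong m y z \<Longrightarrow> pm_cong m x z"
  unfolding pm_cong_def by (metis cong_trans cong_minus_minus_iff minus_minus)

lemma pm_cong_mult_left: "pm_cong m x y \<Longrightarrow> pm_cong m (c * x) (c * y)"
  unfolding pm_cong_def by (metis cong_scalar_left mult_minus_right)

lemma pm_cong_cancel:
  assumes "coprime l m" "pm_cong m (l * x) (l * y)"
  shows "pm_cong m x y"
  using assms cong_mult_lcancel[OF assms(1)] unfolding pm_cong_def
  by (metis mult_minus_right)

text \<open>Integers in {1..q0} are pairwise non-congruent up to sign modulo q, since 2 q0 \<le> q.\<close>
lemma pm_cong_small_eq:
  fixes x y :: int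
  assumes "q > 0" "1 \<le> x" "x \<le> int (q0 q)" "1 \<le> y" "y \<le> int (q0 q)"
    and "pm_cong (int q) x y"
  shows "x = y"
proof -
  have bound: "2 * int (q0 q) \<le> int q" using assms(1) unfolding q0_def by auto
  consider k where "x - y = int q * k" | k where "x + y = int q * k"
    using assms(6) unfolding pm_cong_def by (auto simp: cong_iff_dvd_diff dvd_def)
  then show ?thesis
  proof cases
    case (1 k)
    have "\<bar>int q * k\<bar> < int q" using 1 bound assms by linarith
    then have "k = 0" using assms(1) by (auto simp: abs_mult)
    then show ?thesis using 1 by simp
  next
    case (2 k)
    have "0 < int q * k" "int q * k \<le> int q" using 2 bound assms by linarith+
    then have "k = 1" using assms(1) by (simp add: zero_less_mult_iff)
    then have "x + y = int q" using 2 by simp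
    then show ?thesis using bound assms by linarith
  qed
qed

section \<open>Normalized subsets and their tuples\<close>

definition set_tuple :: "nat set \<Rightarrow> int list" where
  "set_tuple A = map int (sorted_list_of_set A)"

definition normalized_sets :: "nat \<Rightarrow> nat \<Rightarrow> nat set set" where
  "normalized_sets q n = {A. A \<subseteq> {1..q0 q} \<and> card A = n \<and> 1 \<in> A}"

definition recovered_set :: "nat \<Rightarrow> nat set \<Rightarrow> int \<Rightarrow> nat set" where
  "recovered_set q A c = {b \<in> {1..q0 q}. \<exists>a\<in>A. pm_cong (int q) (int a) (c * int b)}"

lemma set_tuple_facts:
  assumes "finite A"
  shows "length (set_tuple A) = card A" "set (set_tuple A) = int ` A" "distinct (set_tuple A)"
  using assms by (auto simp: set_tuple_def distinct_map inj_on_def)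

lemma normalized_sets_finite: "A \<in> normalized_sets q n \<Longrightarrow> finite A"
  unfolding normalized_sets_def using finite_subset by blast

text \<open>Normalized sets are {1} together with an (n-1)-subset of {2..q0}.\<close>
lemma card_normalized_sets:
  assumes "n \<ge> 1" "q0 q \<ge> 1"
  shows "card (normalized_sets q n) = (q0 q - 1) choose (n - 1)"
proof -
  let ?C = "{C. C \<subseteq> {2..q0 q} \<and> card C = n - 1}"
  have "normalized_sets q n = insert 1 ` ?C"
  proof (intro equalityI subsetI)
    fix A assume A: "A \<in> normalized_sets q n"
    then have "A = insert 1 (A - {1})" "A - {1} \<in> ?C"
      using normalized_sets_finite[OF A] by (auto simp: normalized_sets_def)
    then show "A \<in> insert 1 ` ?C" by blast
  next
    fix A assume "A \<in> insert 1 ` ?C"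
    then obtain C where C: "C \<subseteq> {2..q0 q}" "card C = n - 1" "A = insert 1 C" by auto
    then have "finite C" "1 \<notin> C" using finite_subset by auto
    then show "A \<in> normalized_sets q n"
      using C assms by (auto simp: normalized_sets_def)
  qed
  moreover have "inj_on (insert 1) ?C"
    by (rule inj_onI) (metis Diff_insert_absorb mem_Collect_eq subsetD atLeastAtMost_iff
        numeral_le_one_iff semiring_norm(69))
  ultimately show ?thesis by (simp add: card_image n_subsets)
qed

text \<open>The tuple of a normalized set is admissible: its entries are distinct elements
  of {1..q0}, hence pairwise non-congruent up to sign, and the entry 1 makes the gcd 1.\<close>
lemma set_tuple_in_I0_tilde:
  assumes "q > 0" and A: "A \<in> normalized_sets q n"
  shows "set_tuple A \<in> I0_tilde q n"
proof -
  note facts = set_tuple_facts[OF normalized_sets_finite[OF A]]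
  have sub: "A \<subseteq> {1..q0 q}" and len: "length (set_tuple A) = n" and one: "1 \<in> A"
    using A facts(1) by (auto simp: normalized_sets_def)
  have distinct_entries: "\<not> pm_cong (int q) (set_tuple A ! i) (set_tuple A ! j)"
    if "i < j" "j < n" for i j
  proof
    assume "pm_cong (int q) (set_tuple A ! i) (set_tuple A ! j)"
    moreover have "set_tuple A ! i \<in> int ` A" "set_tuple A ! j \<in> int ` A"
      using that len facts(2) nth_mem by (metis order.strict_trans)+
    ultimately obtain a b where "a \<in> A" "b \<in> A" "pm_cong (int q) (int a) (int b)"
        "set_tuple A ! i = int a" "set_tuple A ! j = int b" by auto
    then have "set_tuple A ! i = set_tuple A ! j"
      using pm_cong_small_eq[OF assms(1), of "int a" "int b"] sub by force
    then show False using that len facts(3) by (simp add: nth_eq_iff_index_eq)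
  qed
  have "Gcd (insert (int q) (set (set_tuple A))) = 1"
    by (rule Gcd_eq_1_I[of 1]) (use one facts(2) in auto)
  then show ?thesis
    using distinct_entries len unfolding I0_tilde_def pm_cong_def by auto
qed

section \<open>Recovering a normalized set from an equivalent one\<close>

lemma tuple_equiv_entry_sets:
  assumes "length p = n" "length s = n" "tuple_equiv q n p s"
  obtains l where "coprime l (int q)"
    "\<forall>x\<in>set p. \<exists>y\<in>set s. pm_cong (int q) x (l * y)"
    "\<forall>y\<in>set s. \<exists>x\<in>set p. pm_cong (int q) x (l * y)"
proof -
  obtain l e \<sigma> where l: "coprime l (int q)" and e: "\<forall>i<n. e i \<in> {-1, 1}"
    and \<sigma>: "\<sigma> permutes {..<n}" and eq: "\<forall>i<n. [p ! i = e (\<sigma> i) * l * s ! (\<sigma> i)] (mod int q)"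
    using assms(3) unfolding tuple_equiv_def by blast
  have entry: "pm_cong (int q) (p ! i) (l * s ! \<sigma> i)" if "i < n" for i
    using pm_cong_of_sign[of "e (\<sigma> i)"] eq e that permutes_in_image[OF \<sigma>]
    by (simp add: mult.assoc)
  have "\<forall>x\<in>set p. \<exists>y\<in>set s. pm_cong (int q) x (l * y)"
    using entry assms(1,2) permutes_in_image[OF \<sigma>] by (metis in_set_conv_nth lessThan_iff nth_mem)
  moreover have "\<forall>y\<in>set s. \<exists>x\<in>set p. pm_cong (int q) x (l * y)"
  proof
    fix y assume "y \<in> set s"
    then obtain k where k: "k < n" "y = s ! k" using assms(2) by (auto simp: in_set_conv_nth)
    moreover have "k \<in> \<sigma> ` {..<n}" using permutes_image[OF \<sigma>] k(1) by simp
    ultimately obtain i where "i < n" "\<sigma> i = k" by auto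
    then show "\<exists>x\<in>set p. pm_cong (int q) x (l * y)" using entry k assms(1) by force
  qed
  ultimately show ?thesis using that l by blast
qed

lemma recovered_set_eq:
  assumes "q > 0" "coprime l (int q)" "A' \<subseteq> {1..q0 q}" "1 \<in> A'"
    and forward: "\<forall>a\<in>A. \<exists>b'\<in>A'. pm_cong (int q) (int a) (l * int b')"
    and backward: "\<forall>b\<in>A'. \<exists>a\<in>A. pm_cong (int q) (int a) (l * int b)"
  obtains c where "c \<in> A" "A' = recovered_set q A (int c)"
proof -
  obtain c where c: "c \<in> A" "pm_cong (int q) (int c) l"
    using backward assms(4) by force
  have c_mult: "pm_cong (int q) (int c * int b) (l * int b)" for b
    using pm_cong_mult_left[OF c(2), of "int b"] by (simp add: ac_simps)
  have "A' = recovered_set q A (int c)"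
  proof (intro equalityI subsetI)
    fix b assume b: "b \<in> A'"
    then obtain a where "a \<in> A" "pm_cong (int q) (int a) (l * int b)" using backward by blast
    then show "b \<in> recovered_set q A (int c)"
      using b assms(3) pm_cong_trans[OF _ pm_cong_sym[OF c_mult]]
      by (auto simp: recovered_set_def)
  next
    fix b assume "b \<in> recovered_set q A (int c)"
    then obtain a where b: "b \<in> {1..q0 q}" "a \<in> A" "pm_cong (int q) (int a) (int c * int b)"
      by (auto simp: recovered_set_def)
    obtain b' where b': "b' \<in> A'" "pm_cong (int q) (int a) (l * int b')" using forward b(2) by blast
    have "pm_cong (int q) (l * int b') (l * int b)"
      using pm_cong_trans[OF pm_cong_sym[OF b'(2)] pm_cong_trans[OF b(3) c_mult]] .
    then have "pm_cong (int q) (int b') (int b)" using pm_cong_cancel[OF assms(2)] by blast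
    then have "int b' = int b"
      using pm_cong_small_eq[OF assms(1), of "int b'" "int b"] b(1) b'(1) assms(3) by auto
    then have "b' = b" by simp
    then show "b \<in> A'" using b' by simp
  qed
  then show ?thesis using that c(1) by blast
qed

lemma equiv_normalized_sets_recovered:
  assumes "q > 0" "A \<in> normalized_sets q n" "A' \<in> normalized_sets q n"
    and "tuple_equiv q n (set_tuple A) (set_tuple A')"
  shows "A' \<in> (\<lambda>i. recovered_set q A (set_tuple A ! i)) ` {..<n}"
proof -
  note facts = set_tuple_facts[OF normalized_sets_finite[OF assms(2)]]
    and facts' = set_tuple_facts[OF normalized_sets_finite[OF assms(3)]]
  have lengths: "length (set_tuple A) = n" "length (set_tuple A') = n"
    using assms(2,3) facts(1) facts'(1) by (auto simp: normalized_sets_def)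
  obtain l where l: "coprime l (int q)"
    "\<forall>x\<in>set (set_tuple A). \<exists>y\<in>set (set_tuple A'). pm_cong (int q) x (l * y)"
    "\<forall>y\<in>set (set_tuple A'). \<exists>x\<in>set (set_tuple A). pm_cong (int q) x (l * y)"
    using tuple_equiv_entry_sets[OF lengths assms(4)] by blast
  have "\<forall>a\<in>A. \<exists>b'\<in>A'. pm_cong (int q) (int a) (l * int b')"
    "\<forall>b\<in>A'. \<exists>a\<in>A. pm_cong (int q) (int a) (l * int b)"
    using l(2,3) unfolding facts(2) facts'(2) by simp_all
  moreover have "A' \<subseteq> {1..q0 q}" "1 \<in> A'" using assms(3) by (simp_all add: normalized_sets_def)
  ultimately obtain c where c: "c \<in> A" "A' = recovered_set q A (int c)"
    using recovered_set_eq[OF assms(1) l(1)] by blast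
  obtain i where i: "i < n" "set_tuple A ! i = int c"
    using c(1) facts(2) lengths(1) by (metis image_eqI in_set_conv_nth)
  show ?thesis using c(2) i by (intro image_eqI[of _ _ i]) simp_all
qed

section \<open>Counting\<close>

lemma card_le_mult_fibres:
  assumes "finite B" "f ` A \<subseteq> B" "\<And>y. y \<in> B \<Longrightarrow> card {x \<in> A. f x = y} \<le> k"
  shows "card A \<le> k * card B"
proof -
  have "A = (\<Union>y\<in>B. {x \<in> A. f x = y})" using assms(2) by auto
  then have "card A \<le> (\<Sum>y\<in>B. card {x \<in> A. f x = y})"
    using card_UN_le[OF assms(1)] by metis
  also have "\<dots> \<le> (\<Sum>y\<in>B. k)" by (rule sum_mono) (rule assms(3))
  finally show ?thesis by (simp add: mult.commute)
qed

text \<open>I0 is finite: a class only depends on the entries of a representative modulo q.\<close>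
lemma finite_I0:
  assumes "q > 0"
  shows "finite (I0 q n)"
proof -
  let ?reduce = "map (\<lambda>a. a mod int q)"
  have class_eq: "I0_rel q n `` {x} = {s \<in> I0_tilde q n. tuple_equiv q n (?reduce x) s}"
    if "x \<in> I0_tilde q n" for x
    using that by (auto simp: I0_rel_def I0_tilde_def tuple_equiv_def cong_def)
  let ?class = "\<lambda>y. {s \<in> I0_tilde q n. tuple_equiv q n y s}"
  have "I0 q n \<subseteq> ?class ` {ys. set ys \<subseteq> {0..<int q} \<and> length ys = n}"
  proof
    fix X assume "X \<in> I0 q n"
    then obtain x where x: "x \<in> I0_tilde q n" "X = I0_rel q n `` {x}"
      unfolding I0_def by (auto elim: quotientE)
    moreover have "?reduce x \<in> {ys. set ys \<subseteq> {0..<int q} \<and> length ys = n}"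
      using x(1) assms by (auto simp: I0_tilde_def)
    ultimately show "X \<in> ?class ` {ys. set ys \<subseteq> {0..<int q} \<and> length ys = n}"
      using class_eq by blast
  qed
  then show ?thesis by (rule finite_subset) (intro finite_imageI finite_lists_length_eq; simp)
qed

lemma normalized_sets_le_n_mult_I0:
  assumes "q > 0"
  shows "card (normalized_sets q n) \<le> n * card (I0 q n)"
proof -
  define cls where "cls A = I0_rel q n `` {set_tuple A}" for A
  have tuple_in_cls: "set_tuple A \<in> cls A" if "A \<in> normalized_sets q n" for A
  proof -
    have "tuple_equiv q n (set_tuple A) (set_tuple A)"
      unfolding tuple_equiv_def
      by (rule exI[of _ 1], rule exI[of _ "\<lambda>_. 1"], rule exI[of _ id]) (auto simp: permutes_id)
    then show ?thesis
      using set_tuple_in_I0_tilde[OF assms that] by (simp add: cls_def I0_rel_def)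
  qed
  have fibre: "card {A \<in> normalized_sets q n. cls A = X} \<le> n" for X
  proof (cases "\<exists>A0 \<in> normalized_sets q n. cls A0 = X")
    case True
    then obtain A0 where A0: "A0 \<in> normalized_sets q n" "cls A0 = X" by blast
    have "{A \<in> normalized_sets q n. cls A = X} \<subseteq>
        (\<lambda>i. recovered_set q A0 (set_tuple A0 ! i)) ` {..<n}"
    proof
      fix A assume A: "A \<in> {A \<in> normalized_sets q n. cls A = X}"
      then have "set_tuple A \<in> cls A0" using tuple_in_cls[of A] A0(2) by simp
      then have "tuple_equiv q n (set_tuple A0) (set_tuple A)" by (simp add: cls_def I0_rel_def)
      then show "A \<in> (\<lambda>i. recovered_set q A0 (set_tuple A0 ! i)) ` {..<n}"
        using equiv_normalized_sets_recovered[OF assms A0(1)] A by blast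
    qed
    then have "card {A \<in> normalized_sets q n. cls A = X} \<le>
        card ((\<lambda>i. recovered_set q A0 (set_tuple A0 ! i)) ` {..<n})"
      by (rule card_mono[rotated]) simp
    also have "\<dots> \<le> n" using card_image_le[of "{..<n}"] by simp
    finally show ?thesis .
  next
    case False
    then have "{A \<in> normalized_sets q n. cls A = X} = {}" by blast
    then show ?thesis by (metis card.empty le0)
  qed
  have "cls ` normalized_sets q n \<subseteq> I0 q n"
    unfolding cls_def I0_def using set_tuple_in_I0_tilde[OF assms] by (blast intro: quotientI)
  then show ?thesis by (rule card_le_mult_fibres[OF finite_I0[OF assms] _ fibre])
qed

theorem proposition2p1p1:
  fixes q n :: nat
  assumes "q > 0" and "\<not> prime q" and "q0 q \<ge> 4"
    and "2 \<le> n" and "n + 2 \<le> q0 q"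
  shows "real (card (I0 q n)) \<ge> (1 / real (q0 q)) * real (q0 q choose n)"
proof -
  have "n * (q0 q choose n) = q0 q * ((q0 q - 1) choose (n - 1))"
    using times_binomial_minus1_eq[of n "q0 q"] assms(4) by simp
  also have "\<dots> \<le> q0 q * (n * card (I0 q n))"
    using normalized_sets_le_n_mult_I0[OF assms(1), of n] card_normalized_sets[of n q] assms(3,4)
    by simp
  finally have "q0 q choose n \<le> q0 q * card (I0 q n)"
    using assms(4) by (simp add: mult.left_commute)
  then have "real (q0 q choose n) \<le> real (q0 q) * real (card (I0 q n))"
    by (metis of_nat_le_iff of_nat_mult)
  then show ?thesis using assms(3) by (simp add: field_simps)
qed

end
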